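(* For every positive integer $d$, there exists a binary matrix $M$ such that $R_{bool}(M)=4d$ and $R_{\mathbb{R}}(M)=3d$.
   Context: $R_{\mathbb{R}}$ is the usual rank over the reals. For a binary $n\times m$ matrix $M$, the boolean rank $R_{bool}(M)$ is the least $k$ such that $M=UV$ with $U\in\{0,1\}^{n\times k}$, $V\in\{0,1\}^{k\times m}$, where the product is computed in the Boolean semiring ($1+1=1$), equivalently the minimum number of all-ones combinatorial rectangles (submatrices) needed to cover the $1$-entries of $M$. *)

theory Defs
  imports "Jordan_Normal_Form.DL_Rank"
begin

definition binary_mat :: "real mat \<Rightarrow> bool" where
  "binary_mat M \<longleftrightarrow> (\<forall>i<dim_row M. \<forall>j<dim_col M. M $$ (i,j) = 0 \<or> M $$ (i,j) = 1)"

definition real_rank :: "real mat \<Rightarrow> nat" where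
  "real_rank M = vec_space.rank (dim_row M) M"

definition bool_rank :: "real mat \<Rightarrow> nat" where
  "bool_rank M = (LEAST k. \<exists>U V :: nat \<Rightarrow> nat \<Rightarrow> bool.
      \<forall>i<dim_row M. \<forall>j<dim_col M. (M $$ (i,j) = 1 \<longleftrightarrow> (\<exists>l<k. U i l \<and> V l j)))"

end

theory Submission
  imports Defs "Jordan_Normal_Form.DL_Rank_Submatrix"
begin

text \<open>Let \<open>A = I + P\<close> with \<open>P\<close> the \<open>4 \<times> 4\<close> cyclic permutation matrix, and let \<open>M\<close> be the direct
  sum of \<open>d\<close> copies of \<open>A\<close>. Since a 4-cycle contains no 2-cycle, \<open>a\<^sub>i\<^sub>j = a\<^sub>j\<^sub>i = 1\<close> forces
  \<open>i = j\<close>; so the diagonal is a fooling set (no all-ones rectangle contains two diagonal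
  entries) and the Boolean rank of \<open>M\<close> is \<open>4d\<close>. Over the reals the columns of \<open>A\<close> satisfy
  \<open>a\<^sub>0 + a\<^sub>2 = a\<^sub>1 + a\<^sub>3\<close>, while the top-left \<open>3 \<times> 3\<close> block of \<open>A\<close> is unitriangular; hence
  \<open>rank A = 3\<close> and \<open>rank M = 3d\<close>.\<close>

lemma bool_cover_by_rows:
  "\<exists>U V :: nat \<Rightarrow> nat \<Rightarrow> bool. \<forall>i<dim_row M. \<forall>j<dim_col M.
     (M $$ (i,j) = 1 \<longleftrightarrow> (\<exists>l<dim_row M. U i l \<and> V l j))"
  by (rule exI[of _ "\<lambda>i l. i = l"], rule exI[of _ "\<lambda>l j. M $$ (l,j) = 1"]) auto

lemma bool_rank_le_dim_row: "bool_rank M \<le> dim_row M"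
  unfolding bool_rank_def using bool_cover_by_rows by (rule Least_le)

lemma bool_rank_cover:
  obtains U V :: "nat \<Rightarrow> nat \<Rightarrow> bool"
  where "\<forall>i<dim_row M. \<forall>j<dim_col M. (M $$ (i,j) = 1 \<longleftrightarrow> (\<exists>l<bool_rank M. U i l \<and> V l j))"
proof -
  let ?P = "\<lambda>k. \<exists>U V :: nat \<Rightarrow> nat \<Rightarrow> bool. \<forall>i<dim_row M. \<forall>j<dim_col M.
    (M $$ (i,j) = 1 \<longleftrightarrow> (\<exists>l<k. U i l \<and> V l j))"
  have "?P (bool_rank M)"
    unfolding bool_rank_def by (rule LeastI_ex[of ?P, OF exI[of ?P, OF bool_cover_by_rows]])
  then show thesis by (elim exE) (erule that)
qed

lemma bool_rank_ge_diagonal_fooling_set: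
  assumes "n \<le> dim_row M" "n \<le> dim_col M"
    and diag: "\<And>i. i < n \<Longrightarrow> M $$ (i,i) = 1"
    and fooling: "\<And>i j. i < n \<Longrightarrow> j < n \<Longrightarrow> M $$ (i,j) = 1 \<Longrightarrow> M $$ (j,i) = 1 \<Longrightarrow> i = j"
  shows "n \<le> bool_rank M"
proof -
  obtain U V :: "nat \<Rightarrow> nat \<Rightarrow> bool" where cover_all: "\<forall>i<dim_row M. \<forall>j<dim_col M.
      (M $$ (i,j) = 1 \<longleftrightarrow> (\<exists>l<bool_rank M. U i l \<and> V l j))"
    by (rule bool_rank_cover)
  have cover: "M $$ (i,j) = 1 \<longleftrightarrow> (\<exists>l<bool_rank M. U i l \<and> V l j)" if "i < n" "j < n" for i j
  proof -
    have "i < dim_row M" "j < dim_col M" using that assms(1,2) by linarith+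
    then show ?thesis using cover_all by blast
  qed
  define f where "f i = (SOME l. l < bool_rank M \<and> U i l \<and> V l i)" for i
  have f: "f i < bool_rank M \<and> U i (f i) \<and> V (f i) i" if "i < n" for i
    using someI_ex[of "\<lambda>l. l < bool_rank M \<and> U i l \<and> V l i"] cover[OF that that] diag[OF that]
    unfolding f_def by simp
  have "inj_on f {..<n}"
  proof (rule inj_onI)
    fix i j assume i: "i \<in> {..<n}" and j: "j \<in> {..<n}" and "f i = f j"
    then have "M $$ (i,j) = 1" "M $$ (j,i) = 1"
      using f[of i] f[of j] cover[of i j] cover[of j i] by auto
    then show "i = j" using fooling i j by blast
  qed
  moreover have "f ` {..<n} \<subseteq> {..<bool_rank M}" using f by auto
  ultimately show ?thesis using card_inj_on_le[of f "{..<n}" "{..<bool_rank M}"] by simp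
qed

lemma (in vec_space) rank_le_card_spanning:
  assumes A: "A \<in> carrier_mat n nc" and W: "W \<subseteq> set (cols A)"
    and S: "set (cols A) \<subseteq> span W"
  shows "rank A \<le> card W"
proof -
  have WC: "W \<subseteq> carrier_vec n" using A W cols_dim by blast
  have fW: "finite W" using W finite_subset by blast
  have "span (set (cols A)) = span W"
    using span_is_subset[OF S span_is_submodule] WC span_is_monotone[OF W] by auto
  moreover obtain U where U: "maximal U (\<lambda>T. T \<subseteq> W \<and> lin_indpt T)"
    using maximal_exists[of "(\<lambda>T. T \<subseteq> W \<and> lin_indpt T)" "card W" "{}"]
    by (meson fW card_mono empty_iff empty_subsetI finite_lin_indpt2 rev_finite_subset)
  ultimately have "rank A = card U"
    unfolding rank_def using dim_span[OF WC fW] by simp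
  also have "\<dots> \<le> card W" using U fW by (simp add: card_mono maximal_def)
  finally show ?thesis .
qed

lemma (in vec_space) rank_le_of_cols_in_span:
  assumes A: "A \<in> carrier_mat n nc" and "m \<le> nc"
    and in_span: "\<And>j. m \<le> j \<Longrightarrow> j < nc \<Longrightarrow> col A j \<in> span (col A ` {..<m})"
  shows "rank A \<le> m"
proof -
  let ?W = "col A ` {..<m}"
  have W: "?W \<subseteq> set (cols A)" using A \<open>m \<le> nc\<close> by (auto simp: cols_def)
  have WC: "?W \<subseteq> carrier_vec n" using A by auto
  have "set (cols A) \<subseteq> span ?W"
  proof
    fix v assume "v \<in> set (cols A)"
    then obtain j where j: "j < nc" "v = col A j" using A by (auto simp: cols_def)
    show "v \<in> span ?W"
    proof (cases "j < m")
      case True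
      then show ?thesis using j in_own_span[OF WC] by blast
    next
      case False
      then show ?thesis using j in_span by simp
    qed
  qed
  then have "rank A \<le> card ?W" using rank_le_card_spanning[OF A W] by blast
  also have "\<dots> \<le> m" using card_image_le[of "{..<m}" "col A"] by simp
  finally show ?thesis .
qed

lemma pick_lessThan:
  assumes "i < m" shows "pick {..<m} i = i"
proof -
  have "{a \<in> {..<m}. a < i} = {..<i}" using assms by auto
  then show ?thesis using pick_card_in_set[of i "{..<m}"] assms by simp
qed

lemma (in vec_space) rank_ge_of_upper_triangular_leading_block:
  assumes A: "A \<in> carrier_mat n nc" and "m \<le> n" "m \<le> nc"
    and lower_zero: "\<And>i j. j < i \<Longrightarrow> i < m \<Longrightarrow> A $$ (i,j) = 0"
    and diag: "\<And>i. i < m \<Longrightarrow> A $$ (i,i) \<noteq> 0"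
  shows "m \<le> rank A"
proof -
  define S where "S = submatrix A {..<m} {..<m}"
  have "{i. i < n \<and> i \<in> {..<m}} = {..<m}" "{j. j < nc \<and> j \<in> {..<m}} = {..<m}"
    using \<open>m \<le> n\<close> \<open>m \<le> nc\<close> by auto
  then have card_n: "card {i. i < n \<and> i \<in> {..<m}} = m"
    and card_nc: "card {j. j < nc \<and> j \<in> {..<m}} = m" by simp_all
  have dims: "dim_row A = n" "dim_col A = nc" using A by auto
  have S_carrier: "S \<in> carrier_mat m m"
    unfolding S_def by (rule carrier_matI) (simp_all only: dim_submatrix dims card_n card_nc)
  have S_entry: "S $$ (i,j) = A $$ (i,j)" if "i < m" "j < m" for i j
  proof -
    have "S $$ (i,j) = A $$ (pick {..<m} i, pick {..<m} j)"
      unfolding S_def by (rule submatrix_index) (simp_all only: dims card_n card_nc that)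
    then show ?thesis using that by (simp only: pick_lessThan)
  qed
  have "upper_triangular S"
    using S_carrier S_entry lower_zero by (auto simp: upper_triangular_def)
  then have "det S = prod_list (diag_mat S)" using det_upper_triangular S_carrier by blast
  also have "\<dots> \<noteq> 0"
    using S_carrier S_entry diag by (auto simp: diag_mat_def prod_list_zero_iff)
  finally have "det (submatrix A {..<m} {..<m}) \<noteq> 0" unfolding S_def .
  from rank_gt_minor[OF A this] show ?thesis using card_nc by simp
qed

text \<open>Index \<open>i < 4d\<close> stands for position \<open>slot d i\<close> in the copy \<open>block d i\<close> of \<open>I + P\<close>.
  Positions 0, 1, 2 of all blocks are listed before all positions 3, so that the leading
  \<open>3d \<times> 3d\<close> block of the matrix is upper unitriangular.\<close>

definition block :: "nat \<Rightarrow> nat \<Rightarrow> nat" where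
  "block d i = (if i < 3*d then i div 3 else i - 3*d)"

definition slot :: "nat \<Rightarrow> nat \<Rightarrow> nat" where
  "slot d i = (if i < 3*d then i mod 3 else 3)"

definition cycle_adj :: "nat \<Rightarrow> nat \<Rightarrow> nat \<Rightarrow> bool" where
  "cycle_adj d i j \<longleftrightarrow> block d i = block d j \<and> (slot d j = slot d i \<or> slot d j = Suc (slot d i) mod 4)"

definition cycle_blocks_mat :: "nat \<Rightarrow> real mat" where
  "cycle_blocks_mat d = mat (4*d) (4*d) (\<lambda>(i,j). if cycle_adj d i j then 1 else 0)"

lemma cycle_blocks_mat_carrier: "cycle_blocks_mat d \<in> carrier_mat (4*d) (4*d)"
  by (simp add: cycle_blocks_mat_def)

lemma cycle_blocks_mat_index:
  "i < 4*d \<Longrightarrow> j < 4*d \<Longrightarrow> cycle_blocks_mat d $$ (i,j) = (if cycle_adj d i j then 1 else 0)"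
  by (simp add: cycle_blocks_mat_def)

lemma binary_cycle_blocks_mat: "binary_mat (cycle_blocks_mat d)"
  by (simp add: binary_mat_def cycle_blocks_mat_def)

lemma slot_less: "slot d i < 4"
proof -
  have "i mod 3 < 3" by simp
  then have "i mod 3 < 4" by linarith
  then show ?thesis by (simp add: slot_def)
qed

lemma block_slot_inj: "i < 4*d \<Longrightarrow> j < 4*d \<Longrightarrow> block d i = block d j \<Longrightarrow> slot d i = slot d j \<Longrightarrow> i = j"
  unfolding block_def slot_def by (auto split: if_splits) (metis div_mod_decomp)

lemma block_slot_low: "k < d \<Longrightarrow> t < 3 \<Longrightarrow> block d (3*k + t) = k \<and> slot d (3*k + t) = t"
  by (simp add: block_def slot_def)

lemma block_slot_high: "k < d \<Longrightarrow> block d (3*d + k) = k \<and> slot d (3*d + k) = 3"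
  by (simp add: block_def slot_def)

lemma cycle_adj_antisym:
  assumes "i < 4*d" "j < 4*d" "cycle_adj d i j" "cycle_adj d j i"
  shows "i = j"
proof (rule ccontr)
  assume "i \<noteq> j"
  with assms have "slot d i \<noteq> slot d j"
    using block_slot_inj unfolding cycle_adj_def by blast
  with assms have j_succ: "slot d j = Suc (slot d i) mod 4" and i_succ: "slot d i = Suc (slot d j) mod 4"
    unfolding cycle_adj_def by auto
  from i_succ have "slot d i = Suc (Suc (slot d i) mod 4) mod 4" unfolding j_succ .
  moreover have "slot d i = 0 \<or> slot d i = 1 \<or> slot d i = 2 \<or> slot d i = 3"
    using slot_less[of d i] by linarith
  ultimately show False by (elim disjE) simp_all
qed

lemma bool_rank_cycle_blocks_mat: "bool_rank (cycle_blocks_mat d) = 4*d"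
proof (rule antisym)
  show "bool_rank (cycle_blocks_mat d) \<le> 4*d"
    using bool_rank_le_dim_row[of "cycle_blocks_mat d"] by (simp add: cycle_blocks_mat_def)
  show "4*d \<le> bool_rank (cycle_blocks_mat d)"
  proof (rule bool_rank_ge_diagonal_fooling_set)
    show "4*d \<le> dim_row (cycle_blocks_mat d)" "4*d \<le> dim_col (cycle_blocks_mat d)"
      by (simp_all add: cycle_blocks_mat_def)
    show "cycle_blocks_mat d $$ (i,i) = 1" if "i < 4*d" for i
      using that by (simp add: cycle_blocks_mat_index cycle_adj_def)
    show "i = j" if "i < 4*d" "j < 4*d" "cycle_blocks_mat d $$ (i,j) = 1"
      "cycle_blocks_mat d $$ (j,i) = 1" for i j
      using that by (intro cycle_adj_antisym[where d = d]) (auto simp: cycle_blocks_mat_index split: if_splits)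
  qed
qed

lemma cycle_blocks_mat_col_relation:
  assumes k: "k < d"
  shows "col (cycle_blocks_mat d) (3*k+1) + col (cycle_blocks_mat d) (3*d+k)
       = col (cycle_blocks_mat d) (3*k) + col (cycle_blocks_mat d) (3*k+2)"
proof (rule eq_vecI)
  fix i assume "i < dim_vec (col (cycle_blocks_mat d) (3*k) + col (cycle_blocks_mat d) (3*k+2))"
  then have i: "i < 4*d" by (simp add: cycle_blocks_mat_def)
  have entry: "col (cycle_blocks_mat d) c $ i
      = (if block d i = k \<and> (t = slot d i \<or> t = Suc (slot d i) mod 4) then 1 else 0)"
    if "c < 4*d" "block d c = k" "slot d c = t" for c t
    using that i by (simp add: cycle_blocks_mat_def cycle_adj_def)
  have "slot d i = 0 \<or> slot d i = 1 \<or> slot d i = 2 \<or> slot d i = 3"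
    using slot_less[of d i] by linarith
  then show "(col (cycle_blocks_mat d) (3*k+1) + col (cycle_blocks_mat d) (3*d+k)) $ i
      = (col (cycle_blocks_mat d) (3*k) + col (cycle_blocks_mat d) (3*k+2)) $ i"
    using k i entry[of "3*k+1" 1] entry[of "3*d+k" 3] entry[of "3*k" 0] entry[of "3*k+2" 2]
      block_slot_high[OF k] block_slot_low[OF k, of 0] block_slot_low[OF k, of 1] block_slot_low[OF k, of 2]
    by (elim disjE) (simp_all add: cycle_blocks_mat_def)
qed (simp add: cycle_blocks_mat_def)

lemma rank_cycle_blocks_mat_le: "vec_space.rank (4*d) (cycle_blocks_mat d) \<le> 3*d"
proof -
  interpret vec_space "TYPE(real)" "4*d" .
  let ?M = "cycle_blocks_mat d"
  let ?W = "col ?M ` {..<3*d}"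
  have WC: "?W \<subseteq> carrier_vec (4*d)" by (auto simp: cycle_blocks_mat_def)
  show ?thesis
  proof (rule rank_le_of_cols_in_span[OF cycle_blocks_mat_carrier])
    fix j assume j: "3*d \<le> j" "j < 4*d"
    define k where "k = j - 3*d"
    have k: "k < d" "j = 3*d + k" using j k_def by auto
    have own: "col ?M (3*k + t) \<in> span ?W" if "t < 3" for t
      using in_own_span[OF WC] k that by auto
    have "col ?M (3*k+1) + col ?M j \<in> span ?W"
      using cycle_blocks_mat_col_relation[OF k(1)] span_add1[OF WC own[of 0] own[of 2]] k(2) by simp
    then show "col ?M j \<in> span ?W"
      using span_add[OF WC own[of 1]] j by (simp add: cycle_blocks_mat_def)
  qed simp
qed

lemma rank_cycle_blocks_mat_ge: "3*d \<le> vec_space.rank (4*d) (cycle_blocks_mat d)"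
proof (rule vec_space.rank_ge_of_upper_triangular_leading_block[OF cycle_blocks_mat_carrier])
  fix i j assume ji: "j < i" "i < 3*d"
  have "\<not> cycle_adj d i j"
  proof
    assume "cycle_adj d i j"
    then have same_block: "i div 3 = j div 3"
      and slots: "j mod 3 = i mod 3 \<or> j mod 3 = Suc (i mod 3) mod 4"
      using ji by (simp_all add: cycle_adj_def block_def slot_def)
    have "j mod 3 < i mod 3"
      using div_mult_mod_eq[of i 3] div_mult_mod_eq[of j 3] same_block ji(1) by linarith
    moreover have "Suc (i mod 3) < 4" using mod_less_divisor[of 3 i] by linarith
    ultimately show False using slots by auto
  qed
  then show "cycle_blocks_mat d $$ (i,j) = 0" using ji by (simp add: cycle_blocks_mat_index)
qed (auto simp: cycle_blocks_mat_index cycle_adj_def)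

theorem theorem4:
  fixes d :: nat
  assumes "d > 0"
  shows "\<exists>M :: real mat. binary_mat M \<and> bool_rank M = 4 * d \<and> real_rank M = 3 * d"
proof (intro exI conjI)
  show "binary_mat (cycle_blocks_mat d)" by (rule binary_cycle_blocks_mat)
  show "bool_rank (cycle_blocks_mat d) = 4 * d" by (rule bool_rank_cycle_blocks_mat)
  have "dim_row (cycle_blocks_mat d) = 4*d" by (simp add: cycle_blocks_mat_def)
  then show "real_rank (cycle_blocks_mat d) = 3 * d"
    unfolding real_rank_def using rank_cycle_blocks_mat_le[of d] rank_cycle_blocks_mat_ge[of d] by simp
qed

end
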